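(* Let $\Delta$ be a positive integer and suppose there exists a constant $0<c_{\Delta}<1$ such that $\mathrm{es}_{\Delta}(H)\leq c_{\Delta}|V(H)|$ holds for every $\Delta$-regular finite simple graph $H$. Then $\mathrm{es}_{\Delta}(G)\leq c_{\Delta}|V(G)|$ holds for every finite simple graph $G$ with $\Delta(G)=\Delta$.
   Context: For a graph $G$ with at least one edge, $\mathrm{es}_{\Delta}(G)$ denotes the $\Delta$-edge stability number: the minimum number of edges of $G$ whose removal results in a subgraph with maximum degree $\Delta(G)-1$. *)

theory Defs
  imports Complex_Main
begin

definition fin_simple_graph :: "'a set \<Rightarrow> 'a set set \<Rightarrow> bool" where
  "fin_simple_graph V E \<longleftrightarrow> finite V \<and> (\<forall>e\<in>E. e \<subseteq> V \<and> card e = 2)"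

definition degree :: "'a set set \<Rightarrow> 'a \<Rightarrow> nat" where
  "degree E v = card {e\<in>E. v \<in> e}"

definition max_degree :: "'a set \<Rightarrow> 'a set set \<Rightarrow> nat" where
  "max_degree V E = (if V = {} then 0 else Max (degree E ` V))"

definition regular :: "nat \<Rightarrow> 'a set \<Rightarrow> 'a set set \<Rightarrow> bool" where
  "regular d V E \<longleftrightarrow> (\<forall>v\<in>V. degree E v = d)"

definition es_Delta :: "'a set \<Rightarrow> 'a set set \<Rightarrow> nat" where
  "es_Delta V E = (LEAST k. \<exists>F. F \<subseteq> E \<and> card F = k \<and>
       max_degree V (E - F) = max_degree V E - 1)"

end

theory Submission
  imports Defs
begin

(*
  Removing a set F of edges lowers the maximum degree D > 0 to exactly D - 1 only if F
  meets every vertex of degree D, and a minimum-size such cover achieves it; so es_Delta is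
  the least size of a cover of the vertices of maximum degree.

  If G has maximum degree D and minimum degree below D, take two disjoint copies of G and
  join every vertex of degree less than D to its twin. The new graph still has maximum
  degree D, its minimum degree is one larger, it has twice as many vertices, and a cover
  of its maximum-degree vertices restricts to such a cover in each copy, so its es_Delta
  is at least twice that of G. Iterating reaches a D-regular graph without decreasing
  es_Delta / |V|. The doubling needs fresh vertices, so G is first renamed into nat, with
  the copies of v placed at 2v and 2v+1.
*)

lemma fin_simple_graph_finite: "fin_simple_graph V E \<Longrightarrow> finite V"
  unfolding fin_simple_graph_def by blast

lemma fin_simple_graph_finite_edges: "fin_simple_graph V E \<Longrightarrow> finite E"
  unfolding fin_simple_graph_def by (meson PowI finite_Pow_iff finite_subset subsetI)

lemma degree_le_max_degree: "finite V \<Longrightarrow> v \<in> V \<Longrightarrow> degree E v \<le> max_degree V E"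
  unfolding max_degree_def by auto

lemma max_degree_le_iff: "finite V \<Longrightarrow> max_degree V E \<le> k \<longleftrightarrow> (\<forall>v\<in>V. degree E v \<le> k)"
  unfolding max_degree_def by auto

lemma max_degree_attained:
  assumes "finite V" "V \<noteq> {}"
  obtains v where "v \<in> V" "degree E v = max_degree V E"
proof -
  have "Max (degree E ` V) \<in> degree E ` V" using assms by simp
  then obtain v where "v \<in> V" "degree E v = Max (degree E ` V)" by force
  then show ?thesis using that assms unfolding max_degree_def by simp
qed

lemma max_degree_pos_imp_nonempty: "0 < max_degree V E \<Longrightarrow> V \<noteq> {}"
  unfolding max_degree_def by auto

lemma degree_Diff: "finite E \<Longrightarrow> F \<subseteq> E \<Longrightarrow> degree (E - F) v = degree E v - degree F v"
proof -
  assume "finite E" "F \<subseteq> E"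
  then have "{e \<in> E - F. v \<in> e} = {e \<in> E. v \<in> e} - {e \<in> F. v \<in> e}"
    and "{e \<in> F. v \<in> e} \<subseteq> {e \<in> E. v \<in> e}" "finite {e \<in> E. v \<in> e}" by auto
  then show ?thesis unfolding degree_def by (simp add: card_Diff_subset finite_subset)
qed

lemma degree_pos_iff: "finite F \<Longrightarrow> 0 < degree F v \<longleftrightarrow> (\<exists>e\<in>F. v \<in> e)"
  unfolding degree_def by (auto simp: card_gt_0_iff)

section \<open>Covers of the vertices of maximum degree\<close>

definition max_degree_cover :: "'a set \<Rightarrow> 'a set set \<Rightarrow> 'a set set \<Rightarrow> bool" where
  "max_degree_cover V E F \<longleftrightarrow>
     F \<subseteq> E \<and> (\<forall>v\<in>V. degree E v = max_degree V E \<longrightarrow> (\<exists>e\<in>F. v \<in> e))"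

lemma max_degree_remove_cover_le:
  assumes "finite V" "finite E" "max_degree_cover V E F"
  shows "max_degree V (E - F) \<le> max_degree V E - 1"
proof -
  have "degree (E - F) v \<le> max_degree V E - 1" if "v \<in> V" for v
  proof -
    have F: "F \<subseteq> E" "finite F"
      using assms(2,3) finite_subset unfolding max_degree_cover_def by auto
    have "degree E v \<le> max_degree V E"
      using degree_le_max_degree[OF assms(1) that] .
    moreover have "0 < degree F v" if "degree E v = max_degree V E"
      using assms(3) \<open>v \<in> V\<close> that F(2) unfolding max_degree_cover_def degree_pos_iff[OF F(2)]
      by blast
    ultimately show ?thesis
      using degree_Diff[OF assms(2) F(1)] by (cases "degree E v = max_degree V E") auto
  qed
  then show ?thesis using max_degree_le_iff[OF assms(1)] by blast
qed

lemma max_degree_cover_if_remove_eq: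
  assumes "finite V" "finite E" "F \<subseteq> E" "0 < max_degree V E"
    and "max_degree V (E - F) = max_degree V E - 1"
  shows "max_degree_cover V E F"
  unfolding max_degree_cover_def
proof (intro conjI ballI impI)
  fix v assume "v \<in> V" "degree E v = max_degree V E"
  moreover have "degree (E - F) v \<le> max_degree V E - 1"
    using degree_le_max_degree[OF assms(1) \<open>v \<in> V\<close>, of "E - F"] assms(5) by simp
  ultimately have "0 < degree F v"
    using degree_Diff[OF assms(2,3)] assms(4) by simp
  then show "\<exists>e\<in>F. v \<in> e"
    using degree_pos_iff[OF finite_subset[OF assms(3,2)]] by blast
qed fact

lemma max_degree_remove_irredundant_cover:
  assumes "finite V" "finite E" "0 < max_degree V E"
    and cover: "max_degree_cover V E F"
    and irredundant: "\<And>e. e \<in> F \<Longrightarrow> \<not> max_degree_cover V E (F - {e})"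
  shows "max_degree V (E - F) = max_degree V E - 1"
proof -
  have F: "F \<subseteq> E" "finite F"
    using assms(2) cover finite_subset unfolding max_degree_cover_def by auto
  obtain v0 where v0: "v0 \<in> V" "degree E v0 = max_degree V E"
    using max_degree_attained[OF assms(1) max_degree_pos_imp_nonempty[OF assms(3)]] by blast
  then obtain e0 where "e0 \<in> F" "v0 \<in> e0"
    using cover unfolding max_degree_cover_def by blast
  then have "\<not> max_degree_cover V E (F - {e0})"
    using irredundant by blast
  then obtain v1 where v1: "v1 \<in> V" "degree E v1 = max_degree V E" "\<forall>e\<in>F - {e0}. v1 \<notin> e"
    using F(1) unfolding max_degree_cover_def by auto
  then have "{e \<in> F. v1 \<in> e} = {e0}"
    using cover unfolding max_degree_cover_def by auto
  then have "degree (E - F) v1 = max_degree V E - 1"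
    using degree_Diff[OF assms(2) F(1), of v1] v1(2) unfolding degree_def by simp
  then have "max_degree V E - 1 \<le> max_degree V (E - F)"
    using degree_le_max_degree[OF assms(1) v1(1), of "E - F"] by simp
  then show ?thesis
    using max_degree_remove_cover_le[OF assms(1,2) cover] by simp
qed

lemma ex_min_card_max_degree_cover:
  assumes "finite V" "0 < max_degree V E"
  obtains F where "max_degree_cover V E F"
    and "\<And>F'. max_degree_cover V E F' \<Longrightarrow> card F \<le> card F'"
proof -
  have "max_degree_cover V E E"
    unfolding max_degree_cover_def
  proof (intro conjI ballI impI)
    fix v assume "v \<in> V" "degree E v = max_degree V E"
    then have "0 < card {e \<in> E. v \<in> e}"
      using assms(2) unfolding degree_def by simp
    then show "\<exists>e\<in>E. v \<in> e"
      unfolding card_gt_0_iff by blast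
  qed simp
  then show ?thesis
    using ex_has_least_nat[of "max_degree_cover V E" E card] that by blast
qed

lemma es_Delta_eq_min_card_cover:
  assumes "fin_simple_graph V E" "0 < max_degree V E"
    and cover: "max_degree_cover V E F"
    and min: "\<And>F'. max_degree_cover V E F' \<Longrightarrow> card F \<le> card F'"
  shows "es_Delta V E = card F"
proof -
  note fin = fin_simple_graph_finite[OF assms(1)] fin_simple_graph_finite_edges[OF assms(1)]
  have "finite F"
    using cover fin(2) finite_subset unfolding max_degree_cover_def by blast
  then have "\<not> max_degree_cover V E (F - {e})" if "e \<in> F" for e
    using min[of "F - {e}"] card_Diff1_less[OF _ that] by fastforce
  then have "max_degree V (E - F) = max_degree V E - 1"
    using max_degree_remove_irredundant_cover[OF fin assms(2) cover] by blast
  then have "\<exists>F'. F' \<subseteq> E \<and> card F' = card F \<and> max_degree V (E - F') = max_degree V E - 1"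
    using cover unfolding max_degree_cover_def by blast
  moreover have "card F \<le> k"
    if "\<exists>F'. F' \<subseteq> E \<and> card F' = k \<and> max_degree V (E - F') = max_degree V E - 1" for k
    using that min max_degree_cover_if_remove_eq[OF fin] assms(2) by blast
  ultimately show ?thesis
    unfolding es_Delta_def by (rule Least_equality)
qed

lemma es_Delta_le_card_cover:
  assumes "fin_simple_graph V E" "0 < max_degree V E" "max_degree_cover V E F"
  shows "es_Delta V E \<le> card F"
proof -
  obtain F' where "max_degree_cover V E F'" "\<And>G. max_degree_cover V E G \<Longrightarrow> card F' \<le> card G"
    using ex_min_card_max_degree_cover[OF fin_simple_graph_finite[OF assms(1)] assms(2)] by blast
  then show ?thesis
    using es_Delta_eq_min_card_cover[OF assms(1,2)] assms(3) by metis
qed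

lemma ex_max_degree_cover_card_es_Delta:
  assumes "fin_simple_graph V E" "0 < max_degree V E"
  obtains F where "max_degree_cover V E F" "card F = es_Delta V E"
proof -
  obtain F where "max_degree_cover V E F" "\<And>G. max_degree_cover V E G \<Longrightarrow> card F \<le> card G"
    using ex_min_card_max_degree_cover[OF fin_simple_graph_finite[OF assms(1)] assms(2)] by blast
  then show ?thesis
    using es_Delta_eq_min_card_cover[OF assms] that by metis
qed

section \<open>Renaming vertices\<close>

lemma degree_image:
  assumes "\<forall>e\<in>E. e \<subseteq> V" "inj_on f V" "v \<in> V"
  shows "degree ((`) f ` E) (f v) = degree E v"
proof -
  have inj: "inj_on ((`) f) E"
    using inj_on_image[OF inj_on_subset[OF assms(2)]] assms(1) by blast
  have "f v \<in> f ` e \<longleftrightarrow> v \<in> e" if "e \<in> E" for e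
    using inj_on_image_mem_iff[OF assms(2,3)] assms(1) that by blast
  then have "{e' \<in> (`) f ` E. f v \<in> e'} = (`) f ` {e \<in> E. v \<in> e}"
    by blast
  then show ?thesis
    unfolding degree_def using card_image[OF inj_on_subset[OF inj]] by simp
qed

lemma max_degree_image:
  assumes "\<forall>e\<in>E. e \<subseteq> V" "inj_on f V"
  shows "max_degree (f ` V) ((`) f ` E) = max_degree V E"
proof -
  have "degree ((`) f ` E) ` f ` V = degree E ` V"
    using degree_image[OF assms] by (force simp: image_comp)
  then show ?thesis unfolding max_degree_def by simp
qed

lemma fin_simple_graph_image:
  assumes "fin_simple_graph V E" "inj_on f V"
  shows "fin_simple_graph (f ` V) ((`) f ` E)"
  using assms unfolding fin_simple_graph_def by (auto simp: card_image inj_on_subset)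

lemma es_Delta_image:
  assumes "fin_simple_graph V E" "inj_on f V"
  shows "es_Delta (f ` V) ((`) f ` E) = es_Delta V E"
proof -
  have edges: "\<forall>e\<in>E. e \<subseteq> V"
    using assms(1) unfolding fin_simple_graph_def by blast
  have inj: "inj_on ((`) f) E"
    using inj_on_image[OF inj_on_subset[OF assms(2)]] edges by blast
  have removal_image: "card ((`) f ` F) = card F
        \<and> max_degree (f ` V) ((`) f ` E - (`) f ` F) = max_degree V (E - F)"
    if "F \<subseteq> E" for F
  proof -
    have "(`) f ` E - (`) f ` F = (`) f ` (E - F)"
      using inj_on_image_set_diff[OF inj, of E F] that by simp
    moreover have "\<forall>e\<in>E - F. e \<subseteq> V" using edges by blast
    ultimately show ?thesis
      using card_image[OF inj_on_subset[OF inj that]] max_degree_image[OF _ assms(2)] by simp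
  qed
  have ex_subset_image: "(\<exists>F'. F' \<subseteq> (`) f ` E \<and> Q F') \<longleftrightarrow> (\<exists>F. F \<subseteq> E \<and> Q ((`) f ` F))"
    for Q :: "'b set set \<Rightarrow> bool"
    by (metis subset_image_iff)
  have "(\<exists>F'. F' \<subseteq> (`) f ` E \<and> card F' = k
           \<and> max_degree (f ` V) ((`) f ` E - F') = max_degree V E - 1)
    \<longleftrightarrow> (\<exists>F. F \<subseteq> E \<and> card F = k \<and> max_degree V (E - F) = max_degree V E - 1)"
    (is "?image_removal \<longleftrightarrow> _") for k
  proof -
    have "?image_removal \<longleftrightarrow> (\<exists>F. F \<subseteq> E \<and> card ((`) f ` F) = k
           \<and> max_degree (f ` V) ((`) f ` E - (`) f ` F) = max_degree V E - 1)"
      by (rule ex_subset_image)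
    also have "\<dots> \<longleftrightarrow> (\<exists>F. F \<subseteq> E \<and> card F = k \<and> max_degree V (E - F) = max_degree V E - 1)"
      by (rule ex_cong1) (use removal_image in auto)
    finally show ?thesis .
  qed
  then show ?thesis
    unfolding es_Delta_def max_degree_image[OF edges assms(2)] by simp
qed

section \<open>Doubling a graph\<close>

definition copy :: "bool \<Rightarrow> nat \<Rightarrow> nat" where
  "copy b v = 2 * v + of_bool b"

definition doubled_vertices :: "nat set \<Rightarrow> nat set" where
  "doubled_vertices V = copy False ` V \<union> copy True ` V"

definition doubled_edges :: "nat \<Rightarrow> nat set \<Rightarrow> nat set set \<Rightarrow> nat set set" where
  "doubled_edges D V E = (`) (copy False) ` E \<union> (`) (copy True) ` E
     \<union> (\<lambda>v. {copy False v, copy True v}) ` {v \<in> V. degree E v < D}"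

lemma copy_eq_iff [simp]: "copy b x = copy b' y \<longleftrightarrow> b = b' \<and> x = y"
  unfolding copy_def by (cases b; cases b'; simp; presburger)

lemma inj_copy: "inj (copy b)"
  by (simp add: inj_on_def)

lemma inj_image_copy: "inj ((`) (copy b))"
  by (rule inj_on_image) (simp add: inj_copy)

lemma copy_in_image_iff [simp]: "copy b v \<in> copy b' ` e \<longleftrightarrow> b = b' \<and> v \<in> e"
  by auto

lemma twins_not_image_copy: "{copy False v, copy True v} \<noteq> copy b ` e"
proof
  assume "{copy False v, copy True v} = copy b ` e"
  then have "copy False v \<in> copy b ` e" "copy True v \<in> copy b ` e" by blast+
  then show False by simp
qed

lemma doubled_verticesE:
  assumes "w \<in> doubled_vertices V"
  obtains b v where "v \<in> V" "w = copy b v"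
  using assms unfolding doubled_vertices_def by blast

lemma copy_in_doubled_vertices: "v \<in> V \<Longrightarrow> copy b v \<in> doubled_vertices V"
  unfolding doubled_vertices_def by (cases b) auto

lemma card_doubled_vertices: "finite V \<Longrightarrow> card (doubled_vertices V) = 2 * card V"
  unfolding doubled_vertices_def
  by (subst card_Un_disjoint) (auto simp: card_image inj_on_subset[OF inj_copy])

lemma fin_simple_graph_doubled:
  assumes "fin_simple_graph V E"
  shows "fin_simple_graph (doubled_vertices V) (doubled_edges D V E)"
  unfolding fin_simple_graph_def
proof (rule conjI[OF _ ballI])
  show "finite (doubled_vertices V)"
    using assms unfolding fin_simple_graph_def doubled_vertices_def by blast
next
  fix e' assume "e' \<in> doubled_edges D V E"
  then consider (copy) b e where "e \<in> E" "e' = copy b ` e"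
    | (twins) v where "v \<in> V" "e' = {copy False v, copy True v}"
    unfolding doubled_edges_def by blast
  then show "e' \<subseteq> doubled_vertices V \<and> card e' = 2"
  proof cases
    case copy
    then have "e \<subseteq> V" "card e = 2"
      using assms unfolding fin_simple_graph_def by auto
    moreover have "copy b ` e \<subseteq> doubled_vertices V"
      using \<open>e \<subseteq> V\<close> copy_in_doubled_vertices by blast
    ultimately show ?thesis
      using copy(2) card_image[OF inj_on_subset[OF inj_copy subset_UNIV]] by simp
  next
    case twins
    then show ?thesis using copy_in_doubled_vertices by auto
  qed
qed

lemma edges_at_copy:
  assumes "v \<in> V"
  shows "{e' \<in> doubled_edges D V E. copy b v \<in> e'}
    = (`) (copy b) ` {e \<in> E. v \<in> e} \<union> (if degree E v < D then {{copy False v, copy True v}} else {})"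
proof -
  have copies: "{e' \<in> (`) (copy b') ` E. copy b v \<in> e'}
      = (if b' = b then (`) (copy b) ` {e \<in> E. v \<in> e} else {})" for b'
    by auto
  have "copy b v \<in> {copy False u, copy True u} \<longleftrightarrow> u = v" for u
    by (cases b) auto
  then have twins: "{e' \<in> (\<lambda>u. {copy False u, copy True u}) ` {u \<in> V. degree E u < D}. copy b v \<in> e'}
      = (if degree E v < D then {{copy False v, copy True v}} else {})"
    using assms by auto
  have "{e' \<in> doubled_edges D V E. copy b v \<in> e'}
      = {e' \<in> (`) (copy False) ` E. copy b v \<in> e'} \<union> {e' \<in> (`) (copy True) ` E. copy b v \<in> e'}
        \<union> {e' \<in> (\<lambda>u. {copy False u, copy True u}) ` {u \<in> V. degree E u < D}. copy b v \<in> e'}"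
    unfolding doubled_edges_def by blast
  then show ?thesis
    unfolding copies twins by (cases b) auto
qed

lemma degree_copy:
  assumes "finite E" "v \<in> V"
  shows "degree (doubled_edges D V E) (copy b v) = degree E v + of_bool (degree E v < D)"
proof -
  have "card ((`) (copy b) ` {e \<in> E. v \<in> e}) = degree E v"
    unfolding degree_def by (rule card_image[OF inj_on_subset[OF inj_image_copy subset_UNIV]])
  moreover have "(`) (copy b) ` {e \<in> E. v \<in> e} \<inter> {{copy False v, copy True v}} = {}"
    using twins_not_image_copy by blast
  ultimately show ?thesis
    unfolding degree_def[of "doubled_edges D V E"] edges_at_copy[OF assms(2)]
    using assms(1) by (simp add: card_Un_disjoint)
qed

lemma max_degree_doubled:
  assumes "fin_simple_graph V E" "max_degree V E = D"
  shows "max_degree (doubled_vertices V) (doubled_edges D V E) = D"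
proof (cases "V = {}")
  case True
  then show ?thesis using assms(2) unfolding max_degree_def doubled_vertices_def by simp
next
  case False
  note fin = fin_simple_graph_finite[OF assms(1)] fin_simple_graph_finite_edges[OF assms(1)]
  have fin2: "finite (doubled_vertices V)"
    using fin(1) unfolding doubled_vertices_def by blast
  have "degree (doubled_edges D V E) w \<le> D" if w: "w \<in> doubled_vertices V" for w
  proof -
    obtain b v where "v \<in> V" "w = copy b v"
      using doubled_verticesE[OF w] by blast
    then show ?thesis
      using degree_copy[OF fin(2)] degree_le_max_degree[OF fin(1), of v E] assms(2) by auto
  qed
  moreover obtain v0 where "v0 \<in> V" "degree E v0 = D"
    using max_degree_attained[OF fin(1) False] assms(2) by metis
  then have "degree (doubled_edges D V E) (copy False v0) = D"
    using degree_copy[OF fin(2)] by simp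
  then have "D \<le> max_degree (doubled_vertices V) (doubled_edges D V E)"
    using degree_le_max_degree[OF fin2 copy_in_doubled_vertices[OF \<open>v0 \<in> V\<close>],
        of "doubled_edges D V E" False] by simp
  ultimately show ?thesis
    using max_degree_le_iff[OF fin2] by (simp add: le_antisym)
qed

lemma max_degree_cover_copy_preimage:
  assumes "fin_simple_graph V E" "max_degree V E = D"
    and "max_degree_cover (doubled_vertices V) (doubled_edges D V E) F'"
  shows "max_degree_cover V E {e \<in> E. copy b ` e \<in> F'}"
  unfolding max_degree_cover_def
proof (intro conjI ballI impI)
  fix v assume v: "v \<in> V" "degree E v = max_degree V E"
  have "finite E" using assms(1) by (rule fin_simple_graph_finite_edges)
  then have "degree (doubled_edges D V E) (copy b v) = max_degree (doubled_vertices V) (doubled_edges D V E)"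
    using degree_copy v max_degree_doubled[OF assms(1,2)] assms(2) by simp
  then obtain e' where "e' \<in> F'" "copy b v \<in> e'" "e' \<in> doubled_edges D V E"
    using assms(3) copy_in_doubled_vertices[OF v(1)] unfolding max_degree_cover_def by blast
  moreover have "{e' \<in> doubled_edges D V E. copy b v \<in> e'} = (`) (copy b) ` {e \<in> E. v \<in> e}"
    using edges_at_copy[OF v(1), of D E b] v(2) assms(2) by simp
  ultimately have "e' \<in> (`) (copy b) ` {e \<in> E. v \<in> e}"
    by blast
  then obtain e where "e \<in> E" "v \<in> e" "e' = copy b ` e"
    by blast
  then show "\<exists>e\<in>{e \<in> E. copy b ` e \<in> F'}. v \<in> e"
    using \<open>e' \<in> F'\<close> by blast
qed blast

lemma card_copy_preimages_le:
  assumes "finite F'" "{} \<notin> E"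
  shows "card {e \<in> E. copy False ` e \<in> F'} + card {e \<in> E. copy True ` e \<in> F'} \<le> card F'"
proof -
  define A where "A b = (`) (copy b) ` {e \<in> E. copy b ` e \<in> F'}" for b
  have card_A: "card (A b) = card {e \<in> E. copy b ` e \<in> F'}" for b
    unfolding A_def by (rule card_image[OF inj_on_subset[OF inj_image_copy subset_UNIV]])
  have A_sub: "A b \<subseteq> F'" for b
    unfolding A_def by blast
  have copies_differ: "copy False ` e1 \<noteq> copy True ` e2" if "e1 \<noteq> {}" for e1 e2
  proof
    assume images_eq: "copy False ` e1 = copy True ` e2"
    obtain x where "x \<in> e1" using \<open>e1 \<noteq> {}\<close> by blast
    then have "copy False x \<in> copy True ` e2" using images_eq by blast
    then show False by simp
  qed
  have "A False \<inter> A True = {}"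
  proof (rule ccontr)
    assume "A False \<inter> A True \<noteq> {}"
    then obtain e1 e2 where "e1 \<in> E" "copy False ` e1 = copy True ` e2"
      unfolding A_def by blast
    moreover have "e1 \<noteq> {}"
      using \<open>e1 \<in> E\<close> assms(2) by blast
    ultimately show False
      using copies_differ by metis
  qed
  moreover have "finite (A b)" for b
    using A_sub assms(1) by (rule finite_subset)
  ultimately have "card (A False) + card (A True) = card (A False \<union> A True)"
    by (simp add: card_Un_disjoint)
  also have "\<dots> \<le> card F'"
    using A_sub assms(1) by (simp add: card_mono)
  finally show ?thesis unfolding card_A .
qed

lemma es_Delta_doubled_ge:
  assumes "fin_simple_graph V E" "max_degree V E = D" "0 < D"
  shows "2 * es_Delta V E \<le> es_Delta (doubled_vertices V) (doubled_edges D V E)"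
proof -
  have doubled: "fin_simple_graph (doubled_vertices V) (doubled_edges D V E)"
    "0 < max_degree (doubled_vertices V) (doubled_edges D V E)"
    using fin_simple_graph_doubled[OF assms(1)] max_degree_doubled[OF assms(1,2)] assms(3) by auto
  obtain F' where F': "max_degree_cover (doubled_vertices V) (doubled_edges D V E) F'"
    "card F' = es_Delta (doubled_vertices V) (doubled_edges D V E)"
    using ex_max_degree_cover_card_es_Delta[OF doubled] by blast
  have "finite F'"
    using F'(1) fin_simple_graph_finite_edges[OF doubled(1)] finite_subset
    unfolding max_degree_cover_def by blast
  moreover have "{} \<notin> E"
    using assms(1) unfolding fin_simple_graph_def by force
  ultimately have "card {e \<in> E. copy False ` e \<in> F'} + card {e \<in> E. copy True ` e \<in> F'} \<le> card F'"
    by (rule card_copy_preimages_le)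
  moreover have copy_bound: "es_Delta V E \<le> card {e \<in> E. copy b ` e \<in> F'}" for b
    using es_Delta_le_card_cover[OF assms(1) _ max_degree_cover_copy_preimage[OF assms(1,2) F'(1)]]
      assms(2,3) by simp
  ultimately show ?thesis
    using copy_bound[of False] copy_bound[of True] F'(2) by linarith
qed

lemma es_Delta_bound_by_doubling:
  fixes c :: real and V :: "nat set"
  assumes "0 < D"
    and regular_bound: "\<And>(W :: nat set) F. fin_simple_graph W F \<Longrightarrow> regular D W F \<Longrightarrow>
               real (es_Delta W F) \<le> c * real (card W)"
  shows "fin_simple_graph V E \<Longrightarrow> max_degree V E = D \<Longrightarrow> \<forall>v\<in>V. D - j \<le> degree E v
     \<Longrightarrow> real (es_Delta V E) \<le> c * real (card V)"
proof (induction j arbitrary: V E)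
  case 0
  have "regular D V E"
    unfolding regular_def
  proof
    fix v assume "v \<in> V"
    then have "degree E v \<le> D" "D \<le> degree E v"
      using degree_le_max_degree[OF fin_simple_graph_finite[OF "0.prems"(1)]] "0.prems"(2,3) by auto
    then show "degree E v = D" by simp
  qed
  then show ?case using regular_bound "0.prems"(1) by blast
next
  case (Suc j)
  note fin = fin_simple_graph_finite[OF Suc.prems(1)] fin_simple_graph_finite_edges[OF Suc.prems(1)]
  let ?V = "doubled_vertices V" and ?E = "doubled_edges D V E"
  have "\<forall>w\<in>?V. D - j \<le> degree ?E w"
  proof
    fix w assume "w \<in> ?V"
    then obtain b v where "v \<in> V" "w = copy b v"
      using doubled_verticesE by blast
    then show "D - j \<le> degree ?E w"
      using degree_copy[OF fin(2) \<open>v \<in> V\<close>, of D b] Suc.prems(3)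
      by (cases "degree E v < D") auto
  qed
  then have "real (es_Delta ?V ?E) \<le> c * real (card ?V)"
    using Suc.IH fin_simple_graph_doubled[OF Suc.prems(1)] max_degree_doubled[OF Suc.prems(1,2)]
    by blast
  moreover have "2 * es_Delta V E \<le> es_Delta ?V ?E"
    using es_Delta_doubled_ge[OF Suc.prems(1,2) assms(1)] .
  ultimately show ?case
    using card_doubled_vertices[OF fin(1)] by simp
qed

theorem theorem3p2:
  fixes \<Delta> :: nat and c :: real and V :: "'a set" and E :: "'a set set"
  assumes "\<Delta> > 0" and "0 < c" and "c < 1"
    and hyp: "\<And>(W :: nat set) (F :: nat set set).
               fin_simple_graph W F \<Longrightarrow> regular \<Delta> W F \<Longrightarrow>
               real (es_Delta W F) \<le> c * real (card W)"
    and "fin_simple_graph V E" and "max_degree V E = \<Delta>"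
  shows "real (es_Delta V E) \<le> c * real (card V)"
proof -
  obtain f :: "'a \<Rightarrow> nat" where f: "inj_on f V"
    using finite_imp_inj_to_nat_seg[OF fin_simple_graph_finite[OF assms(5)]] by metis
  have edges: "\<forall>e\<in>E. e \<subseteq> V"
    using assms(5) unfolding fin_simple_graph_def by blast
  have "max_degree (f ` V) ((`) f ` E) = \<Delta>"
    using max_degree_image[OF edges f] assms(6) by simp
  then have "real (es_Delta (f ` V) ((`) f ` E)) \<le> c * real (card (f ` V))"
    using es_Delta_bound_by_doubling[OF assms(1) hyp fin_simple_graph_image[OF assms(5) f], where j = \<Delta>]
    by simp
  then show ?thesis
    using es_Delta_image[OF assms(5) f] card_image[OF f] by simp
qed

end
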